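(* There exists an absolute constant $c>0$ such that the following holds. Let $k'\ge0$ be an integer, let $y_1,y_2\in\mathbb R$ with $|y_1|,|y_2|\le c\,3^{-k'}$, and let $w_1,w_2\in\mathbb C$ satisfy $|w_j|=e^{y_j}$ ($j=1,2$) and $1+w_1+w_2=0$. Then for every integer $k$ with $1\le k\le k'+1$, $$\operatorname{Re}\big(1+w_1^{3^k}+w_2^{3^k}\big)\ge 2,\quad\text{in particular}\quad |1+w_1^{3^k}+w_2^{3^k}|\ge2.$$ *)

theory Defs
  imports "HOL-Analysis.Analysis"
begin

end

theory Submission
  imports Defs
begin

(* If 1 + w1 + w2 = 0 and |w1|, |w2| are both within a factor e^d of 1,
   then the triangle with vertices 0, -1, w1 (side lengths 1, |w2|, |w1|) is almost equilateral, so w1 lies within O(d) of a primitive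
   cube root of unity \<omega>, and w2 = -1 - w1 lies within the same distance of \<omega>^2 = -1 - \<omega>.
   For N = 3^k with k \<ge> 1 we have \<omega>^N = (\<omega>^2)^N = 1, so w_j^N = u_j^N with u_j = w_j / \<omega>^j
   close to 1; the estimate |u^N - 1| \<le> (1 + |u - 1|)^N - 1 \<le> 2 N |u - 1| then shows
   Re (w_j^N) \<ge> 1/2 as long as N d is small, which is guaranteed by d = 3^(-k')/1000 and
   N \<le> 3^(k'+1). *)

lemma norm_power_sub_one_le:
  fixes u :: "'a::real_normed_algebra_1"
  shows "norm (u ^ n - 1) \<le> (1 + norm (u - 1)) ^ n - 1"
proof (induction n)
  case 0
  then show ?case by simp
next
  case (Suc n)
  have split: "u ^ Suc n - 1 = u * (u ^ n - 1) + (u - 1)"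
    by (simp add: algebra_simps)
  have norm_u: "norm u \<le> 1 + norm (u - 1)"
    using norm_triangle_ineq[of "u - 1" 1] by simp
  have "norm (u ^ Suc n - 1) \<le> norm (u * (u ^ n - 1)) + norm (u - 1)"
    unfolding split by (rule norm_triangle_ineq)
  also have "\<dots> \<le> norm u * norm (u ^ n - 1) + norm (u - 1)"
    by (rule add_right_mono, rule norm_mult_ineq)
  also have "\<dots> \<le> (1 + norm (u - 1)) * ((1 + norm (u - 1)) ^ n - 1) + norm (u - 1)"
    using Suc norm_u by (intro add_mono mult_mono) auto
  also have "\<dots> = (1 + norm (u - 1)) ^ Suc n - 1"
    by (simp add: algebra_simps)
  finally show ?case .
qed

lemma norm_power_sub_one_le_linear:
  fixes u :: "'a::real_normed_algebra_1"
  assumes small: "real n * norm (u - 1) \<le> 1/2"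
  shows "norm (u ^ n - 1) \<le> 2 * (real n * norm (u - 1))"
proof -
  have "(1 + norm (u - 1)) ^ n \<le> exp (norm (u - 1)) ^ n"
    by (intro power_mono) (auto simp: add.commute)
  also have "\<dots> = exp (real n * norm (u - 1))"
    by (simp add: exp_of_nat_mult)
  also have "\<dots> \<le> 1 + 2 * (real n * norm (u - 1))"
    using small by (intro real_exp_bound_lemma) auto
  finally show ?thesis
    using norm_power_sub_one_le[of u n] by linarith
qed

lemma Re_power_near_root_of_unity:
  fixes w \<omega> :: complex
  assumes root: "\<omega> ^ n = 1" and unit: "cmod \<omega> = 1"
    and close: "real n * cmod (w - \<omega>) \<le> 1/4"
  shows "Re (w ^ n) \<ge> 1/2"
proof -
  define u where "u = w * cnj \<omega>"
  have \<omega>_cnj: "\<omega> * cnj \<omega> = 1"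
    using unit by (simp add: complex_mult_cnj cmod_def complex_eq_iff)
  have "u - 1 = (w - \<omega>) * cnj \<omega>"
    unfolding u_def using \<omega>_cnj by (simp add: algebra_simps)
  then have u_close: "cmod (u - 1) = cmod (w - \<omega>)"
    using unit by (simp add: norm_mult)
  have "w = u * \<omega>"
    unfolding u_def using \<omega>_cnj by (simp add: mult.assoc mult.commute)
  then have "w ^ n = u ^ n"
    using root by (simp add: power_mult_distrib)
  moreover have "cmod (u ^ n - 1) \<le> 1/2"
    using norm_power_sub_one_le_linear[of n u] close u_close by simp
  moreover have "\<bar>Re (u ^ n - 1)\<bar> \<le> cmod (u ^ n - 1)"
    by (rule abs_Re_le_cmod)
  ultimately show ?thesis by simp
qed

lemma abs_exp_square_sub_one_le:
  fixes y d :: real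
  assumes "\<bar>y\<bar> \<le> d" "d \<le> 1/4"
  shows "\<bar>exp y ^ 2 - 1\<bar> \<le> 4 * d"
proof -
  have square: "exp y ^ 2 = exp (2 * y)"
    by (metis exp_of_nat_mult of_nat_numeral)
  have "exp (2 * y) \<le> exp (2 * d)"
    using assms by simp
  also have "\<dots> \<le> 1 + 2 * (2 * d)"
    using assms by (intro real_exp_bound_lemma) auto
  finally have upper: "exp (2 * y) \<le> 1 + 4 * d" by simp
  have lower: "1 + 2 * y \<le> exp (2 * y)"
    by (rule exp_ge_add_one_self)
  show ?thesis
    unfolding square using upper lower assms by linarith
qed

text \<open>Coordinates \<open>(a, b)\<close> of a point at distance about 1 from both 0 and \<open>-1\<close>: the point is
  close to \<open>(-1/2, \<plusminus>\<surd>3/2)\<close>, the apex of the equilateral triangle on \<open>[-1, 0]\<close>.\<close>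
lemma almost_equilateral_coordinates:
  fixes a b d :: real
  assumes dist0: "\<bar>a\<^sup>2 + b\<^sup>2 - 1\<bar> \<le> 4 * d"
    and dist1: "\<bar>(1 + a)\<^sup>2 + b\<^sup>2 - 1\<bar> \<le> 4 * d"
    and small: "d \<le> 1/100"
  shows "\<bar>a + 1/2\<bar> \<le> 4 * d" and "\<bar>\<bar>b\<bar> - sqrt 3 / 2\<bar> \<le> 14 * d"
proof -
  have "a + 1/2 = (((1 + a)\<^sup>2 + b\<^sup>2 - 1) - (a\<^sup>2 + b\<^sup>2 - 1)) / 2"
    by (simp add: power2_eq_square algebra_simps)
  then show a_close: "\<bar>a + 1/2\<bar> \<le> 4 * d"
    using dist0 dist1 by (simp add: abs_le_iff)
  have "\<bar>a\<^sup>2 - 1/4\<bar> = \<bar>a + 1/2\<bar> * \<bar>a - 1/2\<bar>"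
    by (simp add: power2_eq_square algebra_simps flip: abs_mult)
  also have "\<dots> \<le> (4 * d) * 2"
    using a_close small by (intro mult_mono) (auto simp: abs_le_iff)
  finally have "\<bar>a\<^sup>2 - 1/4\<bar> \<le> 8 * d" by simp
  then have b_square: "\<bar>b\<^sup>2 - 3/4\<bar> \<le> 12 * d"
    using dist0 by (simp add: abs_le_iff)
  define s where "s = sqrt 3 / 2"
  have "12/7 \<le> sqrt 3"
    by (rule real_le_rsqrt) (simp add: power2_eq_square)
  then have s_facts: "s\<^sup>2 = 3/4" "s \<ge> 6/7"
    unfolding s_def by (auto simp: power_divide)
  have "b\<^sup>2 - 3/4 = (\<bar>b\<bar> - s) * (\<bar>b\<bar> + s)"
    using s_facts by (simp add: power2_eq_square algebra_simps flip: abs_mult)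
  then have "\<bar>b\<^sup>2 - 3/4\<bar> = \<bar>\<bar>b\<bar> - s\<bar> * (\<bar>b\<bar> + s)"
    using s_facts by (simp add: abs_mult)
  moreover have "\<bar>\<bar>b\<bar> - s\<bar> * (6/7) \<le> \<bar>\<bar>b\<bar> - s\<bar> * (\<bar>b\<bar> + s)"
    using s_facts by (intro mult_left_mono) auto
  ultimately show "\<bar>\<bar>b\<bar> - sqrt 3 / 2\<bar> \<le> 14 * d"
    using b_square unfolding s_def by linarith
qed

lemma near_primitive_cube_root:
  fixes w :: complex and y1 y2 d :: real
  assumes "\<bar>y1\<bar> \<le> d" "\<bar>y2\<bar> \<le> d" and small: "d \<le> 1/100"
    and "cmod w = exp y1" "cmod (1 + w) = exp y2"
  shows "\<exists>\<omega>. 1 + \<omega> + \<omega>\<^sup>2 = 0 \<and> cmod (w - \<omega>) \<le> 18 * d"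
proof -
  define a b where "a = Re w" and "b = Im w"
  have "\<bar>a\<^sup>2 + b\<^sup>2 - 1\<bar> \<le> 4 * d"
    using abs_exp_square_sub_one_le[of y1 d] assms cmod_power2[of w]
    unfolding a_def b_def by simp
  moreover have "\<bar>(1 + a)\<^sup>2 + b\<^sup>2 - 1\<bar> \<le> 4 * d"
    using abs_exp_square_sub_one_le[of y2 d] assms cmod_power2[of "1 + w"]
    unfolding a_def b_def by simp
  ultimately have a_close: "\<bar>a + 1/2\<bar> \<le> 4 * d" and b_close: "\<bar>\<bar>b\<bar> - sqrt 3 / 2\<bar> \<le> 14 * d"
    using almost_equilateral_coordinates small by blast+
  define s where "s = (if b \<ge> 0 then sqrt 3 / 2 else - sqrt 3 / 2)"
  define \<omega> where "\<omega> = Complex (-1/2) s"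
  have "s\<^sup>2 = 3/4"
    unfolding s_def by (simp add: power_divide)
  then have "1 + \<omega> + \<omega>\<^sup>2 = 0"
    unfolding \<omega>_def by (simp add: complex_eq_iff power2_eq_square)
  moreover have "\<bar>b - s\<bar> \<le> 14 * d"
    using b_close unfolding s_def by (auto split: if_splits)
  then have "cmod (w - \<omega>) \<le> 18 * d"
    using cmod_le[of "w - \<omega>"] a_close unfolding \<omega>_def a_def b_def by simp
  ultimately show ?thesis by blast
qed

lemma primitive_cube_root_facts:
  fixes \<omega> :: complex
  assumes "1 + \<omega> + \<omega>\<^sup>2 = 0"
  shows "\<omega> ^ 3 = 1" and "cmod \<omega> = 1"
proof -
  have "\<omega> ^ 3 - 1 = (\<omega> - 1) * (1 + \<omega> + \<omega>\<^sup>2)"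
    by (simp add: algebra_simps power2_eq_square power3_eq_cube)
  then show cube: "\<omega> ^ 3 = 1"
    using assms by simp
  then have "cmod \<omega> ^ 3 = 1 ^ 3"
    by (metis norm_one norm_power power_one)
  then show "cmod \<omega> = 1"
    using power_eq_imp_eq_base[of "cmod \<omega>" 3 1] by simp
qed

lemma Re_sum_of_powers_ge_two:
  fixes w1 w2 :: complex and y1 y2 d :: real and k k' :: nat
  assumes y_small: "\<bar>y1\<bar> \<le> d" "\<bar>y2\<bar> \<le> d" and d_def: "d = (1/1000) / 3 ^ k'"
    and moduli: "cmod w1 = exp y1" "cmod w2 = exp y2"
    and sum: "1 + w1 + w2 = 0" and k_range: "1 \<le> k" "k \<le> k' + 1"
  shows "Re (1 + w1 ^ (3 ^ k) + w2 ^ (3 ^ k)) \<ge> 2"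
proof -
  define N where "N = (3::nat) ^ k"
  have w2_eq: "w2 = -1 - w1"
    using sum by (simp add: algebra_simps eq_neg_iff_add_eq_0)
  have "d \<le> 1/1000"
    unfolding d_def by (simp add: field_simps)
  then have "d \<le> 1/100"
    by simp
  moreover have "cmod (1 + w1) = exp y2"
    using moduli(2) w2_eq by (metis minus_diff_eq norm_minus_cancel diff_minus_eq_add add.commute)
  ultimately obtain \<omega> where \<omega>_root: "1 + \<omega> + \<omega>\<^sup>2 = 0" and w1_close: "cmod (w1 - \<omega>) \<le> 18 * d"
    using near_primitive_cube_root moduli(1) y_small by blast
  have cube: "\<omega> ^ 3 = 1" and unit: "cmod \<omega> = 1"
    using primitive_cube_root_facts[OF \<omega>_root] by auto
  have "(w2 - \<omega>\<^sup>2) - (\<omega> - w1) = (1 + w1 + w2) - (1 + \<omega> + \<omega>\<^sup>2)"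
    by (simp add: algebra_simps)
  then have "w2 - \<omega>\<^sup>2 = \<omega> - w1"
    using sum \<omega>_root by simp
  then have w2_close: "cmod (w2 - \<omega>\<^sup>2) = cmod (w1 - \<omega>)"
    by (simp add: norm_minus_commute)
  obtain j where "k = Suc j"
    using k_range(1) by (cases k) auto
  then have N_eq: "N = 3 * 3 ^ j"
    unfolding N_def by simp
  have "\<omega> ^ N = (\<omega> ^ 3) ^ 3 ^ j"
    unfolding N_eq by (rule power_mult)
  moreover have "(\<omega>\<^sup>2) ^ N = (\<omega> ^ 3) ^ (2 * 3 ^ j)"
    unfolding N_eq by (simp flip: power_mult add: mult.commute mult.left_commute)
  ultimately have roots: "\<omega> ^ N = 1" "(\<omega>\<^sup>2) ^ N = 1"
    using cube by simp_all
  have "real N \<le> 3 ^ (k' + 1)"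
    unfolding N_def using power_increasing[OF k_range(2), of "3::real"] by simp
  then have "real N * (18 * d) \<le> 3 ^ (k' + 1) * (18 * d)"
    using d_def by (intro mult_right_mono) auto
  also have "\<dots> \<le> 1/4"
    using d_def by simp
  finally have scale: "real N * cmod (w1 - \<omega>) \<le> 1/4"
    using w1_close by (smt (verit) mult_left_mono of_nat_0_le_iff)
  have "Re (w1 ^ N) \<ge> 1/2" "Re (w2 ^ N) \<ge> 1/2"
    using Re_power_near_root_of_unity[OF roots(1) unit scale]
      Re_power_near_root_of_unity[OF roots(2), of w2] unit scale w2_close
    by (simp_all add: norm_power)
  then show ?thesis
    unfolding N_def by simp
qed

theorem lemma24:
  shows "\<exists>c::real. c > 0 \<and>
    (\<forall>(k'::nat) (y1::real) (y2::real) (w1::complex) (w2::complex).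
       \<bar>y1\<bar> \<le> c * 3 powi (- int k') \<longrightarrow> \<bar>y2\<bar> \<le> c * 3 powi (- int k') \<longrightarrow>
       cmod w1 = exp y1 \<longrightarrow> cmod w2 = exp y2 \<longrightarrow> 1 + w1 + w2 = 0 \<longrightarrow>
       (\<forall>k::nat. 1 \<le> k \<and> k \<le> k' + 1 \<longrightarrow>
          Re (1 + w1 ^ (3 ^ k) + w2 ^ (3 ^ k)) \<ge> 2 \<and>
          cmod (1 + w1 ^ (3 ^ k) + w2 ^ (3 ^ k)) \<ge> 2))"
proof (intro exI[of _ "1/1000"] conjI allI impI)
  fix k' k :: nat and y1 y2 :: real and w1 w2 :: complex
  assume y1: "\<bar>y1\<bar> \<le> 1/1000 * 3 powi (- int k')" and y2: "\<bar>y2\<bar> \<le> 1/1000 * 3 powi (- int k')"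
    and hyps: "cmod w1 = exp y1" "cmod w2 = exp y2" "1 + w1 + w2 = 0" "1 \<le> k \<and> k \<le> k' + 1"
  have "(3::real) powi (- int k') = inverse (3 ^ k')"
    by (metis power_int_minus power_int_of_nat)
  then have scale: "(1/1000::real) * 3 powi (- int k') = (1/1000) / 3 ^ k'"
    by (simp only: divide_inverse)
  show re: "Re (1 + w1 ^ (3 ^ k) + w2 ^ (3 ^ k)) \<ge> 2"
    using Re_sum_of_powers_ge_two[OF y1[unfolded scale] y2[unfolded scale] refl] hyps by blast
  then show "cmod (1 + w1 ^ (3 ^ k) + w2 ^ (3 ^ k)) \<ge> 2"
    using complex_Re_le_cmod[of "1 + w1 ^ (3 ^ k) + w2 ^ (3 ^ k)"] by linarith
qed simp

end
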